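(* For every $n\ge0$, the priority lattice $\Pi(n)$ is a graded lattice.
   Context: For $n\ge0$ let $[n]_0=\{0,1,\dots,n\}$. A priority forest on $[n]_0$ is a rooted forest with vertex set $[n]_0$ whose component trees $T_0,T_1,\dots$ are increasing (each non-root vertex has a larger label than its parent) and satisfy: for $j<k$ every label of $T_j$ is smaller than every label of $T_k$. The priority lattice $\Pi(n)$ is the set of all priority forests on $[n]_0$ together with an extra element $\hat1$, partially ordered by $P\le P'$ iff $E(P)\subseteq E(P')$ for priority forests $P,P'$, and with $\hat1$ greater than every other element. Its bottom element $\hat0$ is the forest with no edges. *)

theory Defs
  imports "HOL-Algebra.Lattice"
begin

text \<open>A forest on vertex set {0..n} is encoded by its edge set: (p,c) means p is the parent of c.\<close>

definition conn :: "(nat \<times> nat) set \<Rightarrow> (nat \<times> nat) set" where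
  "conn E = (E \<union> E\<inverse>)\<^sup>*"

definition comp_of :: "nat \<Rightarrow> (nat \<times> nat) set \<Rightarrow> nat \<Rightarrow> nat set" where
  "comp_of n E x = {y \<in> {0..n}. (x, y) \<in> conn E}"

definition priority_forest :: "nat \<Rightarrow> (nat \<times> nat) set \<Rightarrow> bool" where
  "priority_forest n E \<longleftrightarrow>
     E \<subseteq> {0..n} \<times> {0..n} \<and>
     (\<forall>p c. (p, c) \<in> E \<longrightarrow> p < c) \<and>
     (\<forall>p p' c. (p, c) \<in> E \<and> (p', c) \<in> E \<longrightarrow> p = p') \<and>
     (\<forall>x\<in>{0..n}. \<forall>y\<in>{0..n}. comp_of n E x \<noteq> comp_of n E y \<longrightarrow>
        (\<forall>a\<in>comp_of n E x. \<forall>b\<in>comp_of n E y. a < b) \<or>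
        (\<forall>a\<in>comp_of n E x. \<forall>b\<in>comp_of n E y. b < a))"

text \<open>Elements of the priority lattice: Some E for a priority forest with edge set E,
  and None for the extra top element.\<close>
definition priority_le :: "(nat \<times> nat) set option \<Rightarrow> (nat \<times> nat) set option \<Rightarrow> bool" where
  "priority_le x y = (case y of None \<Rightarrow> True
                       | Some F \<Rightarrow> (case x of None \<Rightarrow> False | Some E \<Rightarrow> E \<subseteq> F))"

definition priority_lattice :: "nat \<Rightarrow> (nat \<times> nat) set option gorder" where
  "priority_lattice n =
     \<lparr>carrier = insert None (Some ` {E. priority_forest n E}), eq = (=), le = priority_le\<rparr>"

definition is_chain :: "'a gorder \<Rightarrow> 'a set \<Rightarrow> bool" where
  "is_chain L C \<longleftrightarrow> C \<subseteq> carrier L \<and> (\<forall>x\<in>C. \<forall>y\<in>C. le L x y \<or> le L y x)"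

definition maximal_chain :: "'a gorder \<Rightarrow> 'a set \<Rightarrow> bool" where
  "maximal_chain L C \<longleftrightarrow> is_chain L C \<and> (\<forall>D. is_chain L D \<and> C \<subseteq> D \<longrightarrow> D = C)"

definition graded :: "'a gorder \<Rightarrow> bool" where
  "graded L \<longleftrightarrow> finite (carrier L) \<and>
     (\<forall>C D. maximal_chain L C \<and> maximal_chain L D \<longrightarrow> card C = card D)"

definition graded_lattice :: "'a gorder \<Rightarrow> bool" where
  "graded_lattice L \<longleftrightarrow> lattice L \<and> graded L"

end

theory Submission
  imports Defs "HOL-Algebra.Complete_Lattice"
begin

text \<open>A set of increasing parent edges with unique parents is a priority forest exactly when no
  root lies strictly between the endpoints of an edge; the trees are then the intervals between
  consecutive roots. In this local form a union of priority forests is again one as soon as every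
  vertex keeps at most one parent. Hence the meet of a nonempty family is the union of all forests
  below it (their intersection need not be a priority forest), and \<Pi>(n) is a complete lattice.
  The number of edges is a rank function: below any forest F \<supset> E one can add to E the edge of
  F - E with the smallest child, and a forest with fewer than n edges has a root c > 0 that can
  receive the edge (c - 1, c). So a maximal chain meets every rank 0, ..., n exactly once and ends
  in the top element, giving n + 2 elements.\<close>

definition interval_forest :: "nat \<Rightarrow> (nat \<times> nat) set \<Rightarrow> bool" where
  "interval_forest n E \<longleftrightarrow>
     E \<subseteq> {0..n} \<times> {0..n} \<and> (\<forall>(p, c)\<in>E. p < c) \<and> single_valued (E\<inverse>) \<and>
     (\<forall>(p, c)\<in>E. {p<..<c} \<subseteq> Range E)"

lemma interval_forestD:
  assumes "interval_forest n E"
  shows "E \<subseteq> {0..n} \<times> {0..n}" and "(p, c) \<in> E \<Longrightarrow> p < c"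
    and "(p, c) \<in> E \<Longrightarrow> (p', c) \<in> E \<Longrightarrow> p = p'"
    and "(p, c) \<in> E \<Longrightarrow> p < v \<Longrightarrow> v < c \<Longrightarrow> v \<in> Range E"
  using assms unfolding interval_forest_def
  by (blast, blast, meson converse.intros single_valuedD, fastforce)

lemma conn_sym: "(x, y) \<in> conn E \<Longrightarrow> (y, x) \<in> conn E"
  unfolding conn_def by (metis converse_Un converse_converse rtrancl_converseI sup_commute)

lemma conn_from_root_imp_rtrancl:
  assumes parent: "single_valued (E\<inverse>)" and root: "r \<notin> Range E" and "(r, y) \<in> conn E"
  shows "(r, y) \<in> E\<^sup>*"
  using \<open>(r, y) \<in> conn E\<close> unfolding conn_def
proof (induction rule: rtrancl_induct)
  case (step y z)
  show ?case
  proof (cases "(y, z) \<in> E")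
    case False
    with step.hyps have zy: "(z, y) \<in> E" by blast
    with root have "y \<noteq> r" by blast
    with step.IH obtain w where "(r, w) \<in> E\<^sup>*" "(w, y) \<in> E"
      by (metis rtranclE)
    with zy parent show ?thesis by (metis converse_iff single_valuedD)
  qed (use step.IH in auto)
qed simp

lemma rtrancl_increasing_le:
  fixes E :: "('a::preorder \<times> 'a) set"
  assumes "\<And>p c. (p, c) \<in> E \<Longrightarrow> p \<le> c" and "(x, y) \<in> E\<^sup>*"
  shows "x \<le> y"
  using assms(2)
proof induction
  case (step y z)
  then show ?case using assms(1) order_trans by blast
qed simp

lemma priority_forest_imp_interval_forest:
  assumes "priority_forest n E"
  shows "interval_forest n E"
  unfolding interval_forest_def
proof (intro conjI)
  show box: "E \<subseteq> {0..n} \<times> {0..n}" and lt: "\<forall>(p, c)\<in>E. p < c"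
    using assms unfolding priority_forest_def by auto
  show parent: "single_valued (E\<inverse>)"
    using assms unfolding priority_forest_def single_valued_def converse_iff by blast
  have "v \<in> Range E" if e: "(p, c) \<in> E" and v: "p < v" "v < c" for p c v
    \<comment> \<open>Otherwise the tree of the root v lies above v, while the tree of p contains p < v < c.\<close>
  proof (rule ccontr)
    assume root: "v \<notin> Range E"
    have "v \<le> y" if "y \<in> comp_of n E v" for y
    proof -
      have "(v, y) \<in> E\<^sup>*"
        using that conn_from_root_imp_rtrancl[OF parent root] by (simp add: comp_of_def)
      then show ?thesis by (rule rtrancl_increasing_le[rotated]) (use lt in auto)
    qed
    with v have "p \<notin> comp_of n E v" by (meson leD)
    moreover have p: "p \<in> comp_of n E p" "c \<in> comp_of n E p" and "v \<in> comp_of n E v"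
      using e v box by (auto simp: comp_of_def conn_def)
    ultimately have "comp_of n E v \<noteq> comp_of n E p" by blast
    moreover have "v \<in> {0..n}" "p \<in> {0..n}" using e v box by auto
    moreover have "\<forall>x\<in>{0..n}. \<forall>y\<in>{0..n}. comp_of n E x \<noteq> comp_of n E y \<longrightarrow>
        (\<forall>a\<in>comp_of n E x. \<forall>b\<in>comp_of n E y. a < b) \<or>
        (\<forall>a\<in>comp_of n E x. \<forall>b\<in>comp_of n E y. b < a)"
      using assms unfolding priority_forest_def by blast
    ultimately have "v < p \<or> c < v" using p \<open>v \<in> comp_of n E v\<close> by blast
    with v show False by auto
  qed
  then show "\<forall>(p, c)\<in>E. {p<..<c} \<subseteq> Range E" by auto
qed

text \<open>In an interval forest the tree containing x is the one rooted at \<open>last_root E x\<close>.\<close>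

definition last_root :: "(nat \<times> nat) set \<Rightarrow> nat \<Rightarrow> nat" where
  "last_root E x = Max {r. r \<le> x \<and> r \<notin> Range E}"

lemma le_last_root: "r \<le> x \<Longrightarrow> r \<notin> Range E \<Longrightarrow> r \<le> last_root E x"
  unfolding last_root_def by (rule Max_ge) auto

lemma last_root_le_and_root:
  assumes "0 \<notin> Range E"
  shows "last_root E x \<le> x \<and> last_root E x \<notin> Range E"
proof -
  have "last_root E x \<in> {r. r \<le> x \<and> r \<notin> Range E}"
    unfolding last_root_def using assms by (intro Max_in) auto
  then show ?thesis by simp
qed

lemma mono_last_root: "0 \<notin> Range E \<Longrightarrow> mono (last_root E)"
  using last_root_le_and_root le_last_root order_trans by (metis monoI)

lemma interval_forest_0_notin_Range: "interval_forest n E \<Longrightarrow> 0 \<notin> Range E"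
  using interval_forestD(2) by blast

lemma last_root_edge:
  assumes F: "interval_forest n E" and e: "(p, c) \<in> E"
  shows "last_root E p = last_root E c"
proof -
  note root = last_root_le_and_root[OF interval_forest_0_notin_Range[OF F]]
  have "p < c" using interval_forestD(2)[OF F e] .
  have "last_root E c \<noteq> c" using root[of c] e by (metis RangeI)
  with root[of c] have "last_root E c < c" by simp
  moreover have "\<not> p < last_root E c \<or> \<not> last_root E c < c"
    using interval_forestD(4)[OF F e] root[of c] by blast
  ultimately have "last_root E c \<le> last_root E p"
    using root[of c] by (simp add: le_last_root)
  moreover have "last_root E p \<le> last_root E c"
    using mono_last_root[OF interval_forest_0_notin_Range[OF F]] \<open>p < c\<close> by (simp add: monoD)
  ultimately show ?thesis by simp
qed

lemma last_root_conn_self: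
  assumes F: "interval_forest n E"
  shows "(last_root E x, x) \<in> conn E"
proof (induction x rule: less_induct)
  case (less x)
  show ?case
  proof (cases "x \<in> Range E")
    case False
    then have "last_root E x = x"
      using last_root_le_and_root[OF interval_forest_0_notin_Range[OF F]] le_last_root
      by (simp add: order_antisym)
    then show ?thesis unfolding conn_def by simp
  next
    case True
    then obtain q where q: "(q, x) \<in> E" by blast
    with less interval_forestD(2)[OF F] have "(last_root E q, q) \<in> conn E" by blast
    with q show ?thesis
      unfolding conn_def last_root_edge[OF F q] by (simp add: rtrancl.rtrancl_into_rtrancl)
  qed
qed

lemma conn_iff_last_root_eq:
  assumes F: "interval_forest n E"
  shows "(x, y) \<in> conn E \<longleftrightarrow> last_root E x = last_root E y"
proof
  assume "(x, y) \<in> conn E"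
  then show "last_root E x = last_root E y"
    unfolding conn_def by induction (auto dest: last_root_edge[OF F])
next
  assume "last_root E x = last_root E y"
  then show "(x, y) \<in> conn E"
    using last_root_conn_self[OF F, of x] last_root_conn_self[OF F, of y] conn_sym
    unfolding conn_def by (metis rtrancl_trans)
qed

lemma interval_forest_imp_priority_forest:
  assumes F: "interval_forest n E"
  shows "priority_forest n E"
proof -
  have comp: "comp_of n E x = {y \<in> {0..n}. last_root E y = last_root E x}" for x
    unfolding comp_of_def conn_iff_last_root_eq[OF F] by auto
  have below: "\<forall>a\<in>comp_of n E x. \<forall>b\<in>comp_of n E y. a < b"
    if "last_root E x < last_root E y" for x y
    using that mono_last_root[OF interval_forest_0_notin_Range[OF F]]
    unfolding comp by clarsimp (metis mono_strict_invE)
  have "(\<forall>a\<in>comp_of n E x. \<forall>b\<in>comp_of n E y. a < b) \<or>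
        (\<forall>a\<in>comp_of n E x. \<forall>b\<in>comp_of n E y. b < a)"
    if "comp_of n E x \<noteq> comp_of n E y" for x y
  proof -
    from that have "last_root E x \<noteq> last_root E y"
      unfolding comp by (rule contrapos_nn) simp
    then consider "last_root E x < last_root E y" | "last_root E y < last_root E x"
      by linarith
    then show ?thesis
    proof cases
      case 1
      with below[of x y] show ?thesis by blast
    next
      case 2
      with below[of y x] show ?thesis by blast
    qed
  qed
  with F show ?thesis
    unfolding priority_forest_def by (auto dest: interval_forestD)
qed

lemma priority_forest_iff_interval_forest:
  "priority_forest n E \<longleftrightarrow> interval_forest n E"
  using priority_forest_imp_interval_forest interval_forest_imp_priority_forest by blast

lemma interval_forest_Union:
  assumes forests: "\<And>H. H \<in> S \<Longrightarrow> interval_forest n H" and parent: "single_valued ((\<Union>S)\<inverse>)"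
  shows "interval_forest n (\<Union>S)"
  unfolding interval_forest_def
proof (intro conjI parent)
  show "\<Union>S \<subseteq> {0..n} \<times> {0..n}" and "\<forall>(p, c)\<in>\<Union>S. p < c"
    using interval_forestD(1,2)[OF forests] by blast+
  have "{p<..<c} \<subseteq> Range H" if "H \<in> S" "(p, c) \<in> H" for H p c
    using interval_forestD(4)[OF forests[OF \<open>H \<in> S\<close>] \<open>(p, c) \<in> H\<close>] by auto
  then show "\<forall>(p, c)\<in>\<Union>S. {p<..<c} \<subseteq> Range (\<Union>S)" by fast
qed

lemma interval_forest_Union_below:
  assumes "F0 \<in> \<F>" and "interval_forest n F0"
  shows "interval_forest n (\<Union>{H. interval_forest n H \<and> (\<forall>F\<in>\<F>. H \<subseteq> F)})"
proof (rule interval_forest_Union)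
  have "\<Union>{H. interval_forest n H \<and> (\<forall>F\<in>\<F>. H \<subseteq> F)} \<subseteq> F0" using assms(1) by blast
  with assms(2) show "single_valued ((\<Union>{H. interval_forest n H \<and> (\<forall>F\<in>\<F>. H \<subseteq> F)})\<inverse>)"
    unfolding interval_forest_def by (meson converse_mono single_valued_subset)
qed blast

lemma priority_le_simps [simp]:
  "priority_le x None"
  "\<not> priority_le None (Some F)"
  "priority_le (Some E) (Some F) \<longleftrightarrow> E \<subseteq> F"
  by (simp_all add: priority_le_def split: option.split)

lemma priority_lattice_simps [simp]:
  "carrier (priority_lattice n) = insert None (Some ` {E. interval_forest n E})"
  "le (priority_lattice n) = priority_le"
  "eq (priority_lattice n) = (=)"
  by (simp_all add: priority_lattice_def priority_forest_iff_interval_forest)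

lemma partial_order_priority_lattice: "partial_order (priority_lattice n)"
  by unfold_locales (auto simp: priority_le_def split: option.splits)

lemma complete_lattice_priority_lattice: "complete_lattice (priority_lattice n)"
proof -
  interpret partial_order "priority_lattice n"
    by (rule partial_order_priority_lattice)
  show ?thesis
  proof (rule complete_lattice_criterion1)
    show "\<exists>g. greatest (priority_lattice n) g (carrier (priority_lattice n))"
      by (auto simp: greatest_def)
  next
    fix A assume A: "A \<subseteq> carrier (priority_lattice n)" "A \<noteq> {}"
    show "\<exists>i. greatest (priority_lattice n) i (Lower (priority_lattice n) A)"
    proof (cases "A = {None}")
      case True
      then show ?thesis by (auto simp: greatest_def Lower_def)
    next
      case False
      with A obtain F0 where F0: "Some F0 \<in> A" by auto
      define M where "M = \<Union>{H. interval_forest n H \<and> (\<forall>F\<in>{F. Some F \<in> A}. H \<subseteq> F)}"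
      have "interval_forest n M"
        unfolding M_def using F0 A by (intro interval_forest_Union_below) auto
      show ?thesis
      proof (intro exI greatest_LowerI)
        show "Some M \<sqsubseteq>\<^bsub>priority_lattice n\<^esub> x" if "x \<in> A" for x
          using that unfolding M_def by (cases x) auto
        show "y \<sqsubseteq>\<^bsub>priority_lattice n\<^esub> Some M" if y: "y \<in> Lower (priority_lattice n) A" for y
        proof -
          obtain H where H: "y = Some H" "interval_forest n H"
            using Lower_memD[OF y F0 A(1)] by auto
          moreover have "H \<subseteq> F" if "Some F \<in> A" for F
            using Lower_memD[OF y that A(1)] H by simp
          ultimately show ?thesis unfolding M_def by auto
        qed
        show "A \<subseteq> carrier (priority_lattice n)" by (rule A(1))
        show "Some M \<in> carrier (priority_lattice n)" using \<open>interval_forest n M\<close> by simp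
      qed
    qed
  qed
qed

lemma finite_interval_forests: "finite {E. interval_forest n E}"
  by (rule finite_subset[of _ "Pow ({0..n} \<times> {0..n})"]) (auto dest: interval_forestD(1))

lemma interval_forest_finite: "interval_forest n E \<Longrightarrow> finite E"
  using finite_subset interval_forestD(1) by blast

lemma card_Range_interval_forest: "interval_forest n E \<Longrightarrow> card (Range E) = card E"
  by (metis Range_snd card_image interval_forestD(3) inj_onI prod.collapse)

lemma Range_interval_forest_subset: "interval_forest n E \<Longrightarrow> Range E \<subseteq> {1..n}"
  using interval_forestD(1,2) by fastforce

lemma card_interval_forest_le: "interval_forest n E \<Longrightarrow> card E \<le> n"
  using card_Range_interval_forest Range_interval_forest_subset card_mono[of "{1..n}" "Range E"]
  by fastforce

lemma interval_forest_add_edge: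
  assumes F: "interval_forest n E" and "card E < n"
  shows "\<exists>G. interval_forest n G \<and> E \<subseteq> G \<and> card G = Suc (card E)"
proof -
  from assms have "\<not> {1..n} \<subseteq> Range E"
    using card_Range_interval_forest[OF F] card_mono[of "Range E" "{1..n}"]
    by (metis card_atLeastAtMost diff_Suc_1 finite_Range interval_forest_finite not_le)
  then obtain c where c: "c \<in> {1..n}" "c \<notin> Range E" by blast
  then have new: "(c - 1, c) \<notin> E" by (metis RangeI)
  define G where "G = insert (c - 1, c) E"
  have "interval_forest n G"
    unfolding interval_forest_def
  proof (intro conjI)
    show "G \<subseteq> {0..n} \<times> {0..n}" and "\<forall>(p, c)\<in>G. p < c"
      using interval_forestD(1,2)[OF F] c unfolding G_def by auto
    show "single_valued (G\<inverse>)"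
      using interval_forestD(3)[OF F] c unfolding G_def single_valued_def by blast
    show "\<forall>(p, c)\<in>G. {p<..<c} \<subseteq> Range G"
      using interval_forestD(4)[OF F] unfolding G_def by fastforce
  qed
  moreover have "card G = Suc (card E)"
    using new interval_forest_finite[OF F] unfolding G_def by simp
  ultimately show ?thesis unfolding G_def by blast
qed

text \<open>Every vertex strictly inside the added edge is a child in F via an edge with a smaller
  child, and such an edge already lies in E.\<close>

lemma interval_forest_add_edge_below:
  assumes E: "interval_forest n E" and F: "interval_forest n F" and "E \<subset> F"
  shows "\<exists>G. interval_forest n G \<and> E \<subseteq> G \<and> G \<subseteq> F \<and> card G = Suc (card E)"
proof -
  define c where "c = Min (Range (F - E))"
  have "finite (Range (F - E))" "Range (F - E) \<noteq> {}"
    using interval_forest_finite[OF F] \<open>E \<subset> F\<close> by (auto simp: finite_Range)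
  then have "c \<in> Range (F - E)" and least: "\<And>q v. (q, v) \<in> F - E \<Longrightarrow> c \<le> v"
    unfolding c_def by (auto intro: Min_in Min_le)
  then obtain p where pc: "(p, c) \<in> F" "(p, c) \<notin> E" by blast
  have new: "c \<notin> Range E"
    using pc interval_forestD(3)[OF F] \<open>E \<subset> F\<close> by blast
  define G where "G = insert (p, c) E"
  have "interval_forest n G"
    unfolding interval_forest_def
  proof (intro conjI)
    show "G \<subseteq> {0..n} \<times> {0..n}" and "\<forall>(p, c)\<in>G. p < c"
      using interval_forestD(1,2)[OF E] interval_forestD(1,2)[OF F] pc unfolding G_def by auto
    show "single_valued (G\<inverse>)"
      using interval_forestD(3)[OF E] new unfolding G_def single_valued_def by blast
    have "v \<in> Range E" if v: "p < v" "v < c" for v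
    proof -
      obtain q where "(q, v) \<in> F" using interval_forestD(4)[OF F pc(1) v] by blast
      with least[of q v] \<open>v < c\<close> show ?thesis by force
    qed
    then show "\<forall>(p, c)\<in>G. {p<..<c} \<subseteq> Range G"
      using interval_forestD(4)[OF E] unfolding G_def by fastforce
  qed
  moreover have "card G = Suc (card E)"
    using pc interval_forest_finite[OF E] unfolding G_def by simp
  ultimately show ?thesis
    using pc \<open>E \<subset> F\<close> unfolding G_def by blast
qed

lemma maximal_chain_memI:
  fixes L :: "'a gorder"
  assumes "weak_partial_order L" and "maximal_chain L C" and "x \<in> carrier L"
    and "\<forall>y\<in>C. x \<sqsubseteq>\<^bsub>L\<^esub> y \<or> y \<sqsubseteq>\<^bsub>L\<^esub> x"
  shows "x \<in> C"
proof -
  have "x \<sqsubseteq>\<^bsub>L\<^esub> x" using weak_partial_order.le_refl[OF assms(1,3)] .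
  with assms(2-4) have "is_chain L (insert x C)"
    unfolding maximal_chain_def is_chain_def by auto
  with assms(2) show ?thesis unfolding maximal_chain_def by blast
qed

lemma is_chain_priority_latticeD:
  assumes "is_chain (priority_lattice n) C" and "Some E \<in> C"
  shows "interval_forest n E" and "Some F \<in> C \<Longrightarrow> E \<subseteq> F \<or> F \<subseteq> E"
  using assms unfolding is_chain_def priority_lattice_simps
  by (blast, metis priority_le_simps(3))

lemma maximal_chain_priority_lattice_bounds:
  assumes "maximal_chain (priority_lattice n) C"
  shows "None \<in> C" and "Some {} \<in> C"
  using maximal_chain_memI[OF partial_order.axioms(1)[OF partial_order_priority_lattice] assms]
  by (auto simp: interval_forest_def priority_le_def split: option.split)

lemma interval_forest_add_edge_below_chain:
  assumes E: "interval_forest n E" and "card E < n"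
    and U: "\<And>F. F \<in> U \<Longrightarrow> interval_forest n F \<and> E \<subset> F"
    and chain: "\<And>F F'. F \<in> U \<Longrightarrow> F' \<in> U \<Longrightarrow> F \<subseteq> F' \<or> F' \<subseteq> F"
  shows "\<exists>G. interval_forest n G \<and> E \<subseteq> G \<and> card G = Suc (card E) \<and> (\<forall>F\<in>U. G \<subseteq> F)"
proof (cases "U = {}")
  case True
  with interval_forest_add_edge[OF E \<open>card E < n\<close>] show ?thesis by blast
next
  case False
  have "finite U"
    using U by (blast intro: finite_subset[OF _ finite_interval_forests])
  then obtain F0 where F0: "F0 \<in> U" and minimal: "\<forall>F\<in>U. F \<subseteq> F0 \<longrightarrow> F0 = F"
    using finite_has_minimal[OF _ False] by blast
  then have F0_least: "F0 \<subseteq> F" if "F \<in> U" for F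
    using chain that by blast
  from F0 U obtain G
    where "interval_forest n G" "E \<subseteq> G" "G \<subseteq> F0" "card G = Suc (card E)"
    using interval_forest_add_edge_below[OF E] by blast
  with F0_least show ?thesis by blast
qed

lemma maximal_chain_priority_lattice_card_Suc:
  assumes MC: "maximal_chain (priority_lattice n) C" and E: "Some E \<in> C" and "card E < n"
  shows "\<exists>G. Some G \<in> C \<and> card G = Suc (card E)"
proof -
  have chain: "is_chain (priority_lattice n) C"
    using MC unfolding maximal_chain_def by blast
  note forest = is_chain_priority_latticeD(1)[OF chain]
    and comparable = is_chain_priority_latticeD(2)[OF chain]
  define U where "U = {F. Some F \<in> C \<and> E \<subset> F}"
  obtain G where G: "interval_forest n G" "E \<subseteq> G" "card G = Suc (card E)"
    and below: "\<forall>F\<in>U. G \<subseteq> F"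
    using interval_forest_add_edge_below_chain[OF forest[OF E] \<open>card E < n\<close>, of U]
      forest comparable unfolding U_def by blast
  have "Some G \<in> C"
  proof (rule maximal_chain_memI[OF partial_order.axioms(1)[OF partial_order_priority_lattice] MC])
    show "Some G \<in> carrier (priority_lattice n)" using G by simp
    have "priority_le (Some G) y \<or> priority_le y (Some G)" if "y \<in> C" for y
    proof (cases y)
      case (Some F)
      with that have "F \<subseteq> E \<or> E \<subset> F \<or> F = E" using comparable[OF E] by blast
      with Some that G below show ?thesis unfolding U_def by auto
    qed simp
    then show "\<forall>y\<in>C. Some G \<sqsubseteq>\<^bsub>priority_lattice n\<^esub> y \<or> y \<sqsubseteq>\<^bsub>priority_lattice n\<^esub> Some G"
      by simp
  qed
  with G show ?thesis by blast
qed

lemma card_maximal_chain_priority_lattice: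
  assumes MC: "maximal_chain (priority_lattice n) C"
  shows "card C = n + 2"
proof -
  have chain: "is_chain (priority_lattice n) C"
    using MC unfolding maximal_chain_def by blast
  note forest = is_chain_priority_latticeD(1)[OF chain]
    and comparable = is_chain_priority_latticeD(2)[OF chain]
  note bounds = maximal_chain_priority_lattice_bounds[OF MC]
  define W where "W = {E. Some E \<in> C}"
  have "C - {None} = Some ` W"
    unfolding W_def by (auto, metis image_eqI mem_Collect_eq option.collapse)
  moreover have "finite C"
    using chain finite_interval_forests unfolding is_chain_def by (auto intro: finite_subset)
  ultimately have card_C: "card C = Suc (card W)"
    using bounds(1) by (metis card_Suc_Diff1 card_image inj_Some inj_on_subset subset_UNIV)
  have "inj_on card W"
    by (rule inj_onI)
      (metis W_def comparable card_seteq forest interval_forest_finite mem_Collect_eq order_refl)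
  moreover have "card ` W = {0..n}"
  proof
    show "card ` W \<subseteq> {0..n}"
      unfolding W_def using forest card_interval_forest_le by auto
    have "k \<in> card ` W" if "k \<le> n" for k
      using that
    proof (induction k)
      case 0
      with bounds(2) show ?case unfolding W_def by force
    next
      case (Suc k)
      then obtain E where "Some E \<in> C" "card E = k" "card E < n"
        unfolding W_def by auto
      with maximal_chain_priority_lattice_card_Suc[OF MC] show ?case
        unfolding W_def by force
    qed
    then show "{0..n} \<subseteq> card ` W" by auto
  qed
  ultimately have "card W = Suc n" by (metis card_atLeastAtMost card_image minus_nat.diff_0)
  with card_C show ?thesis by simp
qed

theorem lemma3p1:
  fixes n :: nat
  shows "graded_lattice (priority_lattice n)"
  unfolding graded_lattice_def graded_def
proof (intro conjI allI impI)
  show "lattice (priority_lattice n)"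
    using complete_lattice_priority_lattice by simp
  show "finite (carrier (priority_lattice n))"
    using finite_interval_forests by simp
  fix C D
  assume "maximal_chain (priority_lattice n) C \<and> maximal_chain (priority_lattice n) D"
  then show "card C = card D"
    using card_maximal_chain_priority_lattice by metis
qed

end
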